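(* Suppose $f:\mathbb{R}^n\to\mathbb{R}$ is bounded below by $f_{\mathrm{low}}$, twice continuously differentiable with $L_H$-Lipschitz continuous Hessian, and the Hessians at all iterates satisfy $\|\nabla^2 f(\mathbf{x}_k)\|\leq M$ for some $M>0$ independent of $k$. Fix an iteration $k$ and $\epsilon>0$. Suppose $P_k$ is well-aligned (with parameters $\alpha\in(0,1)$, $P_{\max}>0$), $\sigma_k\geq\epsilon$, and $$\theta := (1-\alpha)^2 - \frac{4M(r-1)\alpha^2}{\epsilon(1-\alpha)^2} > 0.$$ Then $\hat\sigma_k \geq \min((1-\alpha)^2,\theta)\,\epsilon$.
   Context: Iterates $\mathbf{x}_k\in\mathbb{R}^n$ and matrices $P_k\in\mathbb{R}^{n\times p}$ are given. Criticality measures: $\tau_k:=\max(-\lambda_{\min}(\nabla^2 f(\mathbf{x}_k)),0)$, $\sigma_k:=\max(\|\nabla f(\mathbf{x}_k)\|,\tau_k)$; $\hat\tau_k:=\max(-\lambda_{\min}(P_k^T\nabla^2 f(\mathbf{x}_k)P_k),0)$, $\hat\sigma_k:=\max(\|P_k^T\nabla f(\mathbf{x}_k)\|,\hat\tau_k)$. Write the eigendecomposition $\nabla^2 f(\mathbf{x}_k)=\sum_{i=1}^r\lambda_i\mathbf{v}_i\mathbf{v}_i^T$ with $\lambda_1\geq\cdots\geq\lambda_r$, $r:=\operatorname{rank}(\nabla^2 f(\mathbf{x}_k))$, $\mathbf{v}_1,\ldots,\mathbf{v}_r$ orthonormal, and set $\hat{\mathbf{v}}_i:=P_k^T\mathbf{v}_i\in\mathbb{R}^p$.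 $P_k$ is called well-aligned if $\|P_k\|\leq P_{\max}$, $\|P_k^T\nabla f(\mathbf{x}_k)\|\geq(1-\alpha)\|\nabla f(\mathbf{x}_k)\|$, $\|\hat{\mathbf{v}}_r\|\geq 1-\alpha$, and $(\hat{\mathbf{v}}_i^T\hat{\mathbf{v}}_r)^2\leq 4\alpha^2$ for all $i=1,\ldots,r-1$, for some $\alpha\in(0,1)$ and $P_{\max}>0$ independent of $k$. *)

theory Defs
  imports "HOL-Analysis.Analysis"
begin

definition matnorm :: "real^'p^'m \<Rightarrow> real" where
  "matnorm A = onorm (\<lambda>v. A *v v)"

definition lambda_min :: "real^'n^'n \<Rightarrow> real" where
  "lambda_min A = Inf {c. \<exists>v. v \<noteq> 0 \<and> A *v v = c *\<^sub>R v}"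

definition outer :: "real^'n \<Rightarrow> real^'n \<Rightarrow> real^'n^'n" where
  "outer u w = (\<chi> i j. u $ i * w $ j)"

definition tau_crit :: "real^'n^'n \<Rightarrow> real" where
  "tau_crit H = max (- lambda_min H) 0"

definition sigma_crit :: "real^'n \<Rightarrow> real^'n^'n \<Rightarrow> real" where
  "sigma_crit g H = max (norm g) (tau_crit H)"

definition tau_hat :: "real^'p^'n \<Rightarrow> real^'n^'n \<Rightarrow> real" where
  "tau_hat P H = max (- lambda_min (transpose P ** H ** P)) 0"

definition sigma_hat :: "real^'p^'n \<Rightarrow> real^'n \<Rightarrow> real^'n^'n \<Rightarrow> real" where
  "sigma_hat P g H = max (norm (transpose P *v g)) (tau_hat P H)"

definition is_eigdecomp :: "real^'n^'n \<Rightarrow> nat \<Rightarrow> (nat \<Rightarrow> real) \<Rightarrow> (nat \<Rightarrow> real^'n) \<Rightarrow> bool" where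
  "is_eigdecomp H r lam v \<longleftrightarrow>
     r = rank H \<and>
     H = (\<Sum>i=1..r. lam i *\<^sub>R outer (v i) (v i)) \<and>
     (\<forall>i j. 1 \<le> i \<and> i \<le> j \<and> j \<le> r \<longrightarrow> lam j \<le> lam i) \<and>
     (\<forall>i\<in>{1..r}. \<forall>j\<in>{1..r}. v i \<bullet> v j = (if i = j then 1 else 0))"

definition well_aligned :: "real \<Rightarrow> real \<Rightarrow> real^'p^'n \<Rightarrow> real^'n \<Rightarrow> nat \<Rightarrow> (nat \<Rightarrow> real^'n) \<Rightarrow> bool" where
  "well_aligned \<alpha> Pmax P g r v \<longleftrightarrow>
     matnorm P \<le> Pmax \<and>
     norm (transpose P *v g) \<ge> (1 - \<alpha>) * norm g \<and>
     norm (transpose P *v v r) \<ge> 1 - \<alpha> \<and>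
     (\<forall>i\<in>{1..r-1}. ((transpose P *v v i) \<bullet> (transpose P *v v r))\<^sup>2 \<le> 4 * \<alpha>\<^sup>2)"

end

theory Submission
  imports Defs
begin

text \<open>If the gradient is large, alignment keeps \<open>(1 - \<alpha>)\<close> of its norm after projection.
  Otherwise the smallest eigenvalue \<open>\<lambda>\<^sub>r\<close> of the Hessian is at most \<open>-\<epsilon>\<close>, and testing the
  reduced Hessian \<open>P\<^sup>T \<nabla>\<^sup>2f P\<close> on \<open>P\<^sup>T v\<^sub>r\<close> gives a Rayleigh quotient of at most
  \<open>\<lambda>\<^sub>r |P\<^sup>T v\<^sub>r|\<^sup>2 + 4M(r - 1)\<alpha>\<^sup>2 / |P\<^sup>T v\<^sub>r|\<^sup>2\<close>: the other eigendirections contribute at most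
  \<open>M\<close> times their squared overlap with \<open>P\<^sup>T v\<^sub>r\<close>. Only data at the single iterate \<open>x\<^sub>k\<close> enter.\<close>

lemma inner_transpose_matrix_vector:
  fixes A :: "real^'m^'n"
  shows "(transpose A *v x) \<bullet> y = x \<bullet> (A *v y)"
  by (metis dot_lmul_matrix transpose_matrix_vector)

lemma symmetric_matrix_inner_commute:
  fixes A :: "real^'n^'n"
  assumes "transpose A = A"
  shows "u \<bullet> (A *v w) = w \<bullet> (A *v u)"
  by (metis assms inner_commute inner_transpose_matrix_vector)

lemma linear_plus_quadratic_nonneg_imp_zero:
  fixes a b :: real
  assumes "\<And>t. 0 \<le> a * t + b * t\<^sup>2"
  shows "a = 0"
proof (rule ccontr)
  assume "a \<noteq> 0"
  define c where "c = \<bar>b\<bar> + 1"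
  have "c > 0" "b - c < 0" by (auto simp: c_def)
  have "a * (- a / c) + b * (- a / c)\<^sup>2 = a\<^sup>2 * (b - c) / c\<^sup>2"
    using \<open>c > 0\<close> by (simp add: field_simps power2_eq_square)
  also have "\<dots> < 0"
    using \<open>a \<noteq> 0\<close> \<open>c > 0\<close> \<open>b - c < 0\<close> by (intro divide_neg_pos mult_pos_neg) auto
  finally show False using assms[of "- a / c"] by linarith
qed

lemma rayleigh_minimizer_is_eigenvector:
  fixes A :: "real^'n^'n"
  assumes sym: "transpose A = A"
    and lower: "\<And>y. m * (y \<bullet> y) \<le> y \<bullet> (A *v y)"
    and attained: "w \<bullet> (A *v w) = m * (w \<bullet> w)"
  shows "A *v w = m *\<^sub>R w"
proof -
  define d where "d = A *v w - m *\<^sub>R w"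
  have "0 \<le> 2 * (d \<bullet> d) * t + (d \<bullet> (A *v d) - m * (d \<bullet> d)) * t\<^sup>2" for t
  proof -
    have "0 \<le> (w + t *\<^sub>R d) \<bullet> (A *v (w + t *\<^sub>R d)) - m * ((w + t *\<^sub>R d) \<bullet> (w + t *\<^sub>R d))"
      using lower[of "w + t *\<^sub>R d"] by simp
    also have "\<dots> = 2 * (d \<bullet> d) * t + (d \<bullet> (A *v d) - m * (d \<bullet> d)) * t\<^sup>2"
      using symmetric_matrix_inner_commute[OF sym, of w d] attained
      by (simp add: d_def matrix_vector_right_distrib matrix_vector_mult_scaleR
          matrix_vector_mult_diff_distrib inner_add_left inner_add_right inner_diff_left
          inner_diff_right power2_eq_square algebra_simps inner_commute)
    finally show ?thesis .
  qed
  then have "2 * (d \<bullet> d) = 0"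
    by (rule linear_plus_quadratic_nonneg_imp_zero)
  then show ?thesis by (simp add: d_def)
qed

lemma lambda_min_eqI:
  fixes A :: "real^'n^'n"
  assumes "w \<noteq> 0" "A *v w = m *\<^sub>R w"
    and lower: "\<And>y. m * (y \<bullet> y) \<le> y \<bullet> (A *v y)"
  shows "lambda_min A = m"
  unfolding lambda_min_def
proof (rule cInf_eq_minimum)
  show "m \<in> {c. \<exists>v. v \<noteq> 0 \<and> A *v v = c *\<^sub>R v}" using assms(1,2) by auto
next
  fix c assume "c \<in> {c. \<exists>v. v \<noteq> 0 \<and> A *v v = c *\<^sub>R v}"
  then obtain u where "u \<noteq> 0" "A *v u = c *\<^sub>R u" by auto
  then have "m * (u \<bullet> u) \<le> c * (u \<bullet> u)" "u \<bullet> u > 0" using lower[of u] by auto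
  then show "m \<le> c" by simp
qed

lemma symmetric_matrix_rayleigh_minimum:
  fixes A :: "real^'n^'n"
  assumes sym: "transpose A = A"
  obtains w where "w \<noteq> 0" "A *v w = lambda_min A *\<^sub>R w"
    and "\<And>y. lambda_min A * (y \<bullet> y) \<le> y \<bullet> (A *v y)"
proof -
  define q where "q y = y \<bullet> (A *v y)" for y :: "real^'n"
  have q_cont: "continuous_on (sphere 0 1) q"
    unfolding q_def by (intro continuous_intros linear_continuous_on) auto
  obtain w where w: "w \<in> sphere 0 1" and w_min: "\<And>y. y \<in> sphere 0 1 \<Longrightarrow> q w \<le> q y"
    using continuous_attains_inf[OF compact_sphere _ q_cont] by auto
  have lower: "q w * (y \<bullet> y) \<le> q y" for y
  proof (cases "y = 0")
    case False
    have "q w \<le> q (y /\<^sub>R norm y)"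
      using False by (intro w_min) simp
    also have "\<dots> = q y / (norm y)\<^sup>2"
      by (simp add: q_def matrix_vector_mult_scaleR power2_eq_square divide_inverse)
    finally have "q w * (norm y)\<^sup>2 \<le> q y"
      using False by (simp add: pos_le_divide_eq)
    then show ?thesis by (simp add: dot_square_norm)
  qed (simp add: q_def)
  have "w \<noteq> 0" "w \<bullet> w = 1" using w by (auto simp: dot_square_norm)
  have eigen: "A *v w = q w *\<^sub>R w"
    by (rule rayleigh_minimizer_is_eigenvector[OF sym])
      (use lower \<open>w \<bullet> w = 1\<close> in \<open>simp_all add: q_def\<close>)
  have "lambda_min A = q w"
    by (rule lambda_min_eqI[OF \<open>w \<noteq> 0\<close> eigen]) (use lower in \<open>simp add: q_def\<close>)
  then show ?thesis
    using that[OF \<open>w \<noteq> 0\<close>] eigen lower unfolding q_def by metis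
qed

lemma outer_sum_mult_vector:
  "(\<Sum>i\<in>S. c i *\<^sub>R outer (v i) (v i)) *v w = (\<Sum>i\<in>S. (c i * (v i \<bullet> w)) *\<^sub>R v i)"
  by (simp add: vec_eq_iff matrix_vector_mult_def outer_def inner_vec_def sum_component
      sum_distrib_left sum_distrib_right sum.swap[of _ S] mult_ac)

lemma transpose_outer_sum:
  "transpose (\<Sum>i\<in>S. c i *\<^sub>R outer (v i) (v i)) = (\<Sum>i\<in>S. c i *\<^sub>R outer (v i) (v i))"
  by (simp add: vec_eq_iff transpose_def outer_def sum_component mult.commute)

lemma reduced_quadratic_form:
  fixes P :: "real^'p^'n" and H :: "real^'n^'n"
  shows "y \<bullet> ((transpose P ** H ** P) *v y) = (P *v y) \<bullet> (H *v (P *v y))"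
  by (metis inner_commute inner_transpose_matrix_vector matrix_mul_assoc matrix_vector_mul_assoc)

context
  fixes H :: "real^'n^'n" and r :: nat and lam :: "nat \<Rightarrow> real" and v :: "nat \<Rightarrow> real^'n"
  assumes eig: "is_eigdecomp H r lam v"
begin

lemma eigdecomp_sum: "H = (\<Sum>i=1..r. lam i *\<^sub>R outer (v i) (v i))"
  using eig unfolding is_eigdecomp_def by blast

lemma eigdecomp_eigenvalues_antimono: "1 \<le> i \<Longrightarrow> i \<le> j \<Longrightarrow> j \<le> r \<Longrightarrow> lam j \<le> lam i"
  using eig unfolding is_eigdecomp_def by blast

lemma eigdecomp_orthonormal:
  "i \<in> {1..r} \<Longrightarrow> j \<in> {1..r} \<Longrightarrow> v i \<bullet> v j = (if i = j then 1 else 0)"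
  using eig unfolding is_eigdecomp_def by blast

lemma eigdecomp_mult_vector: "H *v w = (\<Sum>i=1..r. (lam i * (v i \<bullet> w)) *\<^sub>R v i)"
  by (subst eigdecomp_sum) (rule outer_sum_mult_vector)

lemma eigdecomp_quadratic_form: "w \<bullet> (H *v w) = (\<Sum>i=1..r. lam i * (v i \<bullet> w)\<^sup>2)"
  unfolding eigdecomp_mult_vector inner_sum_right
  by (simp add: inner_commute power2_eq_square mult_ac)

lemma eigdecomp_symmetric: "transpose H = H"
  using transpose_outer_sum[of lam v "{1..r}"] unfolding eigdecomp_sum[symmetric] .

lemma eigdecomp_eigenvector:
  assumes "j \<in> {1..r}"
  shows "H *v v j = lam j *\<^sub>R v j"
proof -
  have "H *v v j = (\<Sum>i=1..r. if i = j then lam j *\<^sub>R v j else 0)"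
    unfolding eigdecomp_mult_vector
    by (rule sum.cong[OF refl]) (simp add: eigdecomp_orthonormal[OF _ assms])
  also have "\<dots> = lam j *\<^sub>R v j" using assms by simp
  finally show ?thesis .
qed

lemma eigdecomp_eigenvalue_bound:
  assumes "j \<in> {1..r}"
  shows "\<bar>lam j\<bar> \<le> matnorm H"
proof -
  have "norm (v j) = 1"
    using eigdecomp_orthonormal[OF assms assms] by (simp add: norm_eq_sqrt_inner)
  moreover have "norm (H *v v j) \<le> matnorm H * norm (v j)"
    unfolding matnorm_def by (rule onorm) simp
  ultimately show ?thesis by (simp add: eigdecomp_eigenvector[OF assms])
qed

lemma eigdecomp_lambda_min:
  assumes "lambda_min H < 0"
  shows "1 \<le> r" "lam r = lambda_min H"
proof -
  obtain w where w: "w \<noteq> 0" "H *v w = lambda_min H *\<^sub>R w"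
    and lower: "\<And>y. lambda_min H * (y \<bullet> y) \<le> y \<bullet> (H *v y)"
    using symmetric_matrix_rayleigh_minimum[OF eigdecomp_symmetric] by blast
  have "H *v w \<noteq> 0" using w assms by simp
  then obtain j where j: "j \<in> {1..r}" "v j \<bullet> w \<noteq> 0"
    unfolding eigdecomp_mult_vector
    by (metis (no_types, lifting) mult_zero_right scale_zero_left sum.neutral)
  have "lam j * (v j \<bullet> w) = lambda_min H * (v j \<bullet> w)"
    using w(2) eigdecomp_eigenvector[OF j(1)]
      symmetric_matrix_inner_commute[OF eigdecomp_symmetric, of "v j" w]
    by (auto simp: inner_commute)
  then have "lam j = lambda_min H" using j(2) by simp
  show "1 \<le> r" using j(1) by simp
  then have "r \<in> {1..r}" by simp
  have "lam r \<le> lambda_min H"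
    using eigdecomp_eigenvalues_antimono[of j r] j(1) \<open>lam j = lambda_min H\<close> by simp
  moreover have "lambda_min H \<le> lam r"
    using lower[of "v r"] eigdecomp_eigenvector[OF \<open>r \<in> {1..r}\<close>]
      eigdecomp_orthonormal[OF \<open>r \<in> {1..r}\<close> \<open>r \<in> {1..r}\<close>] by simp
  ultimately show "lam r = lambda_min H" by simp
qed

lemma eigdecomp_reduced_quadratic_form:
  fixes P :: "real^'p^'n"
  shows "u \<bullet> ((transpose P ** H ** P) *v u) = (\<Sum>i=1..r. lam i * ((transpose P *v v i) \<bullet> u)\<^sup>2)"
  unfolding reduced_quadratic_form eigdecomp_quadratic_form inner_transpose_matrix_vector ..

lemma lambda_min_reduced_le:
  fixes P :: "real^'p^'n"
  defines "u \<equiv> transpose P *v v r"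
  assumes "1 \<le> r" "u \<noteq> 0"
    and lam_bound: "\<And>i. i \<in> {1..r} \<Longrightarrow> \<bar>lam i\<bar> \<le> M"
    and cross_bound: "\<And>i. i \<in> {1..r-1} \<Longrightarrow> ((transpose P *v v i) \<bullet> u)\<^sup>2 \<le> \<delta>"
  shows "lambda_min (transpose P ** H ** P) \<le> lam r * (u \<bullet> u) + (real r - 1) * M * \<delta> / (u \<bullet> u)"
proof -
  define A where "A = transpose P ** H ** P"
  have "transpose A = A"
    by (simp add: A_def matrix_transpose_mul matrix_mul_assoc eigdecomp_symmetric)
  then have "lambda_min A * (u \<bullet> u) \<le> u \<bullet> (A *v u)"
    using symmetric_matrix_rayleigh_minimum by blast
  also have "\<dots> = lam r * (u \<bullet> u)\<^sup>2 + (\<Sum>i=1..r-1. lam i * ((transpose P *v v i) \<bullet> u)\<^sup>2)"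
  proof -
    have "{1..r} = insert r {1..r-1}" using \<open>1 \<le> r\<close> by auto
    then show ?thesis
      unfolding A_def eigdecomp_reduced_quadratic_form using \<open>1 \<le> r\<close> by (simp add: u_def)
  qed
  also have "\<dots> \<le> lam r * (u \<bullet> u)\<^sup>2 + (real r - 1) * M * \<delta>"
  proof -
    have term_bound: "lam i * ((transpose P *v v i) \<bullet> u)\<^sup>2 \<le> M * \<delta>" if "i \<in> {1..r-1}" for i
    proof -
      have "\<bar>lam i\<bar> \<le> M" using that by (intro lam_bound) auto
      have "lam i * ((transpose P *v v i) \<bullet> u)\<^sup>2 \<le> \<bar>lam i\<bar> * ((transpose P *v v i) \<bullet> u)\<^sup>2"
        by (intro mult_right_mono) auto
      also have "\<dots> \<le> M * \<delta>"
        using \<open>\<bar>lam i\<bar> \<le> M\<close> cross_bound[OF that] by (intro mult_mono) auto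
      finally show ?thesis .
    qed
    have "(\<Sum>i=1..r-1. lam i * ((transpose P *v v i) \<bullet> u)\<^sup>2) \<le> of_nat (card {1..r-1}) * (M * \<delta>)"
      by (rule sum_bounded_above) (rule term_bound)
    then show ?thesis using \<open>1 \<le> r\<close> by (simp add: of_nat_diff mult_ac)
  qed
  finally have "lambda_min A * (u \<bullet> u) \<le> lam r * (u \<bullet> u)\<^sup>2 + (real r - 1) * M * \<delta>" .
  moreover have "u \<bullet> u > 0" using \<open>u \<noteq> 0\<close> by simp
  ultimately have "lambda_min A \<le> (lam r * (u \<bullet> u)\<^sup>2 + (real r - 1) * M * \<delta>) / (u \<bullet> u)"
    by (simp add: pos_le_divide_eq)
  also have "\<dots> = lam r * (u \<bullet> u) + (real r - 1) * M * \<delta> / (u \<bullet> u)"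
    using \<open>u \<bullet> u > 0\<close> by (simp add: add_divide_distrib power2_eq_square)
  finally show ?thesis unfolding A_def .
qed

lemma tau_hat_ge_of_well_aligned:
  fixes P :: "real^'p^'n"
  assumes aligned: "well_aligned \<alpha> Pmax P g r v"
    and "matnorm H \<le> M" "0 < \<alpha>" "\<alpha> < 1" "\<epsilon> > 0"
    and neg_curv: "lambda_min H \<le> - \<epsilon>"
  shows "((1 - \<alpha>)\<^sup>2 - 4 * M * (real r - 1) * \<alpha>\<^sup>2 / (\<epsilon> * (1 - \<alpha>)\<^sup>2)) * \<epsilon> \<le> tau_hat P H"
proof -
  define u where "u = transpose P *v v r"
  define K where "K = (real r - 1) * M * (4 * \<alpha>\<^sup>2)"
  have "lambda_min H < 0" using neg_curv \<open>\<epsilon> > 0\<close> by linarith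
  then have "1 \<le> r" and lam_r: "lam r = lambda_min H"
    by (rule eigdecomp_lambda_min)+
  have "norm u \<ge> 1 - \<alpha>" and cross: "\<And>i. i \<in> {1..r-1} \<Longrightarrow> ((transpose P *v v i) \<bullet> u)\<^sup>2 \<le> 4 * \<alpha>\<^sup>2"
    using aligned by (auto simp: well_aligned_def u_def)
  then have N_ge: "u \<bullet> u \<ge> (1 - \<alpha>)\<^sup>2"
    using \<open>\<alpha> < 1\<close> by (simp add: dot_square_norm power_mono)
  have "(1 - \<alpha>)\<^sup>2 > 0" using \<open>\<alpha> < 1\<close> by simp
  then have "u \<bullet> u > 0" using N_ge by linarith
  then have "u \<noteq> 0" by auto
  have "M \<ge> 0"
    using \<open>1 \<le> r\<close> \<open>matnorm H \<le> M\<close> eigdecomp_eigenvalue_bound[of r] by simp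
  then have "K \<ge> 0" using \<open>1 \<le> r\<close> by (simp add: K_def)
  have "lambda_min (transpose P ** H ** P) \<le> lam r * (u \<bullet> u) + K / (u \<bullet> u)"
    unfolding u_def K_def
  proof (rule lambda_min_reduced_le[OF \<open>1 \<le> r\<close>])
    show "transpose P *v v r \<noteq> 0" using \<open>u \<noteq> 0\<close> by (simp add: u_def)
    show "\<bar>lam i\<bar> \<le> M" if "i \<in> {1..r}" for i
      using eigdecomp_eigenvalue_bound[OF that] \<open>matnorm H \<le> M\<close> by simp
  qed (use cross in \<open>simp add: u_def\<close>)
  also have "\<dots> \<le> - \<epsilon> * (1 - \<alpha>)\<^sup>2 + K / (1 - \<alpha>)\<^sup>2"
  proof (rule add_mono)
    have "lam r * (u \<bullet> u) \<le> - \<epsilon> * (u \<bullet> u)"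
      using lam_r neg_curv by (intro mult_right_mono) auto
    also have "\<dots> \<le> - \<epsilon> * (1 - \<alpha>)\<^sup>2"
      using N_ge \<open>\<epsilon> > 0\<close> by simp
    finally show "lam r * (u \<bullet> u) \<le> - \<epsilon> * (1 - \<alpha>)\<^sup>2" .
    show "K / (u \<bullet> u) \<le> K / (1 - \<alpha>)\<^sup>2"
      using N_ge \<open>K \<ge> 0\<close> mult_pos_pos[OF \<open>u \<bullet> u > 0\<close> \<open>(1 - \<alpha>)\<^sup>2 > 0\<close>]
      by (rule divide_left_mono)
  qed
  also have "\<dots> = - (((1 - \<alpha>)\<^sup>2 - 4 * M * (real r - 1) * \<alpha>\<^sup>2 / (\<epsilon> * (1 - \<alpha>)\<^sup>2)) * \<epsilon>)"
    using \<open>\<epsilon> > 0\<close> \<open>(1 - \<alpha>)\<^sup>2 > 0\<close> by (simp add: K_def field_simps)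
  finally show ?thesis
    unfolding tau_hat_def by linarith
qed

end

theorem lemma3p8:
  fixes f :: "real^'n \<Rightarrow> real"
    and g :: "real^'n \<Rightarrow> real^'n"
    and H :: "real^'n \<Rightarrow> real^'n^'n"
    and x :: "nat \<Rightarrow> real^'n"
    and P :: "nat \<Rightarrow> real^'p^'n"
    and flow LH M \<alpha> Pmax \<epsilon> :: real
    and k r :: nat
    and lam :: "nat \<Rightarrow> real"
    and v :: "nat \<Rightarrow> real^'n"
  assumes bounded_below: "\<forall>y. flow \<le> f y"
    and grad: "\<forall>y. (f has_derivative (\<lambda>h. g y \<bullet> h)) (at y)"
    and hess: "\<forall>y. (g has_derivative (\<lambda>h. H y *v h)) (at y)"
    and hess_cont: "continuous_on UNIV H"
    and hess_lip: "\<forall>y z. matnorm (H y - H z) \<le> LH * norm (y - z)"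
    and M_pos: "M > 0"
    and hess_bdd: "\<forall>j. matnorm (H (x j)) \<le> M"
    and eps_pos: "\<epsilon> > 0"
    and alpha: "0 < \<alpha>" "\<alpha> < 1"
    and Pmax_pos: "Pmax > 0"
    and eig: "is_eigdecomp (H (x k)) r lam v"
    and aligned: "well_aligned \<alpha> Pmax (P k) (g (x k)) r v"
    and sigma_ge: "sigma_crit (g (x k)) (H (x k)) \<ge> \<epsilon>"
    and theta_pos: "(1 - \<alpha>)\<^sup>2 - 4 * M * (real r - 1) * \<alpha>\<^sup>2 / (\<epsilon> * (1 - \<alpha>)\<^sup>2) > 0"
  shows "sigma_hat (P k) (g (x k)) (H (x k))
           \<ge> min ((1 - \<alpha>)\<^sup>2) ((1 - \<alpha>)\<^sup>2 - 4 * M * (real r - 1) * \<alpha>\<^sup>2 / (\<epsilon> * (1 - \<alpha>)\<^sup>2)) * \<epsilon>"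
proof -
  define \<theta> where "\<theta> = (1 - \<alpha>)\<^sup>2 - 4 * M * (real r - 1) * \<alpha>\<^sup>2 / (\<epsilon> * (1 - \<alpha>)\<^sup>2)"
  consider (gradient) "\<epsilon> \<le> norm (g (x k))" | (curvature) "\<epsilon> \<le> tau_crit (H (x k))"
    using sigma_ge unfolding sigma_crit_def by linarith
  then have "min ((1 - \<alpha>)\<^sup>2) \<theta> * \<epsilon> \<le> sigma_hat (P k) (g (x k)) (H (x k))"
  proof cases
    case gradient
    have "min ((1 - \<alpha>)\<^sup>2) \<theta> * \<epsilon> \<le> (1 - \<alpha>)\<^sup>2 * \<epsilon>"
      using eps_pos by (intro mult_right_mono) auto
    also have "\<dots> \<le> (1 - \<alpha>) * \<epsilon>"
      using alpha eps_pos by (intro mult_right_mono) (auto simp: power2_eq_square)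
    also have "\<dots> \<le> (1 - \<alpha>) * norm (g (x k))"
      using alpha gradient by (intro mult_left_mono) auto
    also have "\<dots> \<le> norm (transpose (P k) *v g (x k))"
      using aligned by (simp add: well_aligned_def)
    also have "\<dots> \<le> sigma_hat (P k) (g (x k)) (H (x k))"
      by (simp add: sigma_hat_def)
    finally show ?thesis .
  next
    case curvature
    then have "lambda_min (H (x k)) \<le> - \<epsilon>"
      using eps_pos unfolding tau_crit_def by linarith
    then have "\<theta> * \<epsilon> \<le> tau_hat (P k) (H (x k))"
      unfolding \<theta>_def using hess_bdd alpha eps_pos
      by (intro tau_hat_ge_of_well_aligned[OF eig aligned]) auto
    moreover have "tau_hat (P k) (H (x k)) \<le> sigma_hat (P k) (g (x k)) (H (x k))"
      by (simp add: sigma_hat_def)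
    moreover have "min ((1 - \<alpha>)\<^sup>2) \<theta> * \<epsilon> \<le> \<theta> * \<epsilon>"
      using eps_pos by (intro mult_right_mono) auto
    ultimately show ?thesis by linarith
  qed
  then show ?thesis unfolding \<theta>_def .
qed

end
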